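(* Let $(A,\mathcal H)$ be a left bialgebroid. The assignments $I\mapsto[\pi:\mathcal H\to\mathcal H/I]$ and $[\pi:\mathcal H\to\overline{\mathcal H}]\mapsto\ker(\pi)$ are well-defined, mutually inverse bijections between the set of left ideal two-sided coideals of $\mathcal H$ and the set of quotient left $\mathcal H$-module corings of $\mathcal H$.
   Context: $\Bbbk$ is a field. A left bialgebroid $(A,\mathcal H)$: $\Bbbk$-algebras $A,\mathcal H$, algebra maps $s:A\to\mathcal H$, $t:A^o\to\mathcal H$ with commuting images, $A$-bilinear $\Delta:\mathcal H\to\mathcal H\otimes_A\mathcal H$, $\varepsilon:\mathcal H\to A$ (bimodule structure $a\cdot h\cdot b=s(a)t(b)h$; $\mathcal H\otimes_A\mathcal H$ = quotient of $\mathcal H\otimes\mathcal H$ by span of $t(a)x\otimes y-x\otimes s(a)y$), with $(\mathcal H,\Delta,\varepsilon)$ a coassociative counital $A$-coring, $\Delta$ an algebra map into the Takeuchi product $\{\sum x_i\otimes_Ay_i:\sum x_it(a)\otimes_Ay_i=\sum x_i\otimes_Ay_is(a)\ \forall a\}$, $\varepsilon(xs(\varepsilon(y)))=\varepsilon(xy)=\varepsilon(xt(\varepsilon(y)))$, $\varepsilon(1)=1$; $\Delta(x)=\sum x_1\otimes_Ax_2$. Left $\mathcal H$-modules form a monoidal category: each is an $A$-bimodule via $a\cdot m\cdot b=s(a)t(b)m$, the tensor product $M\otimes_AN$ (quotient of $M\otimes N$ by $t(a)m\otimes n-m\otimes s(a)n$) has action $h(m\otimes n)=\sum h_1m\otimes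 h_2n$, and the unit is $A$ with $h\cdot a=\varepsilon(hs(a))$. A left $\mathcal H$-module coring is a comonoid in this monoidal category; $\mathcal H$ itself is one (regular left action, $\Delta$, $\varepsilon$). A quotient left $\mathcal H$-module coring of $\mathcal H$ is a surjective morphism of left $\mathcal H$-module corings $\pi:\mathcal H\to\overline{\mathcal H}$ (considered up to isomorphism under $\mathcal H$). A left ideal two-sided coideal is a left ideal $I$ with $\varepsilon(I)=0$ and $\Delta(I)\subseteq$ image of $I\otimes_A\mathcal H+\mathcal H\otimes_AI$. *)

theory Defs
  imports Complex_Main
begin

text \<open>A is the type 'a, H is the type 'h (both rings with k-scalar multiplications
scA, scH making them k-algebras); src = s, tgt = t, cop = Delta, cou = epsilon.
Elements of tensor products are represented by finitely supported formal
k-linear combinations of pairs (resp. triples), i.e. elements of the free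
k-vector space, and equality in the tensor product is equality modulo the
k-span of the defining relations.\<close>

record ('k, 'a, 'h) bialg =
  scA :: "'k \<Rightarrow> 'a \<Rightarrow> 'a"
  scH :: "'k \<Rightarrow> 'h \<Rightarrow> 'h"
  src :: "'a \<Rightarrow> 'h"
  tgt :: "'a \<Rightarrow> 'h"
  cop :: "'h \<Rightarrow> 'h \<times> 'h \<Rightarrow> 'k"
  cou :: "'h \<Rightarrow> 'a"

text \<open>A left H-module on a carrier set (its k-structure is c.m = (c 1_H) m,
its A-bimodule structure is a.m.b = s(a) t(b) m).\<close>

record ('h, 'm) hmod =
  mcar :: "'m set"
  madd :: "'m \<Rightarrow> 'm \<Rightarrow> 'm"
  mzero :: 'm
  mact :: "'h \<Rightarrow> 'm \<Rightarrow> 'm"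

record ('h, 'm, 'k, 'a) hcor = "('h, 'm) hmod" +
  mcop :: "'m \<Rightarrow> 'm \<times> 'm \<Rightarrow> 'k"
  mcou :: "'m \<Rightarrow> 'a"

definition kalg :: "('k::field \<Rightarrow> 'r::ring_1 \<Rightarrow> 'r) \<Rightarrow> bool" where
  "kalg sc \<longleftrightarrow> vector_space sc \<and>
     (\<forall>c x y. sc c (x * y) = sc c x * y \<and> sc c (x * y) = x * sc c y)"

definition fsupp :: "('x \<Rightarrow> 'k::zero) \<Rightarrow> 'x set" where
  "fsupp \<phi> = {p. \<phi> p \<noteq> 0}"

definition fdelta :: "'x \<Rightarrow> 'x \<Rightarrow> 'k::{zero,one}" where
  "fdelta p = (\<lambda>q. if q = p then 1 else 0)"

definition fbind :: "('x \<Rightarrow> 'k::comm_ring_1) \<Rightarrow> ('x \<Rightarrow> 'y \<Rightarrow> 'k) \<Rightarrow> 'y \<Rightarrow> 'k" where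
  "fbind \<phi> F = (\<lambda>y. \<Sum>p\<in>fsupp \<phi>. \<phi> p * F p y)"

definition fpush :: "('x \<Rightarrow> 'y) \<Rightarrow> ('x \<Rightarrow> 'k::comm_ring_1) \<Rightarrow> 'y \<Rightarrow> 'k" where
  "fpush f \<phi> = fbind \<phi> (\<lambda>p. fdelta (f p))"

definition msc where "msc B M c m = mact M (scH B c 1) m"

definition tgen :: "('k::field, 'a, 'h::ring_1) bialg \<Rightarrow> ('h, 'm, 'z1) hmod_scheme
    \<Rightarrow> ('h, 'n, 'z2) hmod_scheme \<Rightarrow> ('m \<times> 'n \<Rightarrow> 'k) set" where
  "tgen B M N =
     {(\<lambda>q. fdelta (madd M m m', n) q - fdelta (m, n) q - fdelta (m', n) q) | m m' n.
         m \<in> mcar M \<and> m' \<in> mcar M \<and> n \<in> mcar N}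
   \<union> {(\<lambda>q. fdelta (m, madd N n n') q - fdelta (m, n) q - fdelta (m, n') q) | m n n'.
         m \<in> mcar M \<and> n \<in> mcar N \<and> n' \<in> mcar N}
   \<union> {(\<lambda>q. fdelta (msc B M c m, n) q - c * fdelta (m, n) q) | c m n.
         m \<in> mcar M \<and> n \<in> mcar N}
   \<union> {(\<lambda>q. fdelta (m, msc B N c n) q - c * fdelta (m, n) q) | c m n.
         m \<in> mcar M \<and> n \<in> mcar N}
   \<union> {(\<lambda>q. fdelta (mact M (tgt B a) m, n) q - fdelta (m, mact N (src B a) n) q) | a m n.
         m \<in> mcar M \<and> n \<in> mcar N}"

inductive tnull :: "('k::field, 'a, 'h::ring_1) bialg \<Rightarrow> ('h, 'm, 'z1) hmod_scheme
    \<Rightarrow> ('h, 'n, 'z2) hmod_scheme \<Rightarrow> ('m \<times> 'n \<Rightarrow> 'k) \<Rightarrow> bool"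
  for B M N where
  tnull_zero: "tnull B M N (\<lambda>_. 0)"
| tnull_step: "g \<in> tgen B M N \<Longrightarrow> tnull B M N \<phi> \<Longrightarrow> tnull B M N (\<lambda>p. \<phi> p + c * g p)"

definition tsum where
  "tsum M N \<phi> \<longleftrightarrow> finite (fsupp \<phi>) \<and> fsupp \<phi> \<subseteq> mcar M \<times> mcar N"

definition teq where
  "teq B M N \<phi> \<psi> \<longleftrightarrow> tnull B M N (\<lambda>p. \<phi> p - \<psi> p)"

definition tgen3 :: "('k::field, 'a, 'h::ring_1) bialg \<Rightarrow> ('h, 'm, 'z1) hmod_scheme
    \<Rightarrow> ('h, 'n, 'z2) hmod_scheme \<Rightarrow> ('h, 'p, 'z3) hmod_scheme
    \<Rightarrow> ('m \<times> 'n \<times> 'p \<Rightarrow> 'k) set" where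
  "tgen3 B M N P =
     {(\<lambda>q. fdelta (madd M m m', n, r) q - fdelta (m, n, r) q - fdelta (m', n, r) q) | m m' n r.
         m \<in> mcar M \<and> m' \<in> mcar M \<and> n \<in> mcar N \<and> r \<in> mcar P}
   \<union> {(\<lambda>q. fdelta (m, madd N n n', r) q - fdelta (m, n, r) q - fdelta (m, n', r) q) | m n n' r.
         m \<in> mcar M \<and> n \<in> mcar N \<and> n' \<in> mcar N \<and> r \<in> mcar P}
   \<union> {(\<lambda>q. fdelta (m, n, madd P r r') q - fdelta (m, n, r) q - fdelta (m, n, r') q) | m n r r'.
         m \<in> mcar M \<and> n \<in> mcar N \<and> r \<in> mcar P \<and> r' \<in> mcar P}
   \<union> {(\<lambda>q. fdelta (msc B M c m, n, r) q - c * fdelta (m, n, r) q) | c m n r.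
         m \<in> mcar M \<and> n \<in> mcar N \<and> r \<in> mcar P}
   \<union> {(\<lambda>q. fdelta (m, msc B N c n, r) q - c * fdelta (m, n, r) q) | c m n r.
         m \<in> mcar M \<and> n \<in> mcar N \<and> r \<in> mcar P}
   \<union> {(\<lambda>q. fdelta (m, n, msc B P c r) q - c * fdelta (m, n, r) q) | c m n r.
         m \<in> mcar M \<and> n \<in> mcar N \<and> r \<in> mcar P}
   \<union> {(\<lambda>q. fdelta (mact M (tgt B a) m, n, r) q - fdelta (m, mact N (src B a) n, r) q) | a m n r.
         m \<in> mcar M \<and> n \<in> mcar N \<and> r \<in> mcar P}
   \<union> {(\<lambda>q. fdelta (m, mact N (tgt B a) n, r) q - fdelta (m, n, mact P (src B a) r) q) | a m n r.
         m \<in> mcar M \<and> n \<in> mcar N \<and> r \<in> mcar P}"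

inductive tnull3 :: "('k::field, 'a, 'h::ring_1) bialg \<Rightarrow> ('h, 'm, 'z1) hmod_scheme
    \<Rightarrow> ('h, 'n, 'z2) hmod_scheme \<Rightarrow> ('h, 'p, 'z3) hmod_scheme \<Rightarrow> ('m \<times> 'n \<times> 'p \<Rightarrow> 'k) \<Rightarrow> bool"
  for B M N P where
  tnull3_zero: "tnull3 B M N P (\<lambda>_. 0)"
| tnull3_step: "g \<in> tgen3 B M N P \<Longrightarrow> tnull3 B M N P \<phi> \<Longrightarrow> tnull3 B M N P (\<lambda>p. \<phi> p + c * g p)"

definition teq3 where
  "teq3 B M N P \<phi> \<psi> \<longleftrightarrow> tnull3 B M N P (\<lambda>p. \<phi> p - \<psi> p)"

text \<open>The action of h on M (x)_A N: h (sum m_i (x) n_i) = sum h_1 m_i (x) h_2 n_i,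
where Phi represents Delta(h).\<close>
definition tact where
  "tact M N \<Phi> \<psi> = fbind \<Phi> (\<lambda>(u, v). fpush (\<lambda>(x, y). (mact M u x, mact N v y)) \<psi>)"

definition msum where
  "msum M f S = Finite_Set.fold (\<lambda>x acc. madd M (f x) acc) (mzero M) S"

definition hmodule :: "('k::field, 'a, 'h::ring_1) bialg \<Rightarrow> ('h, 'm, 'z) hmod_scheme \<Rightarrow> bool" where
  "hmodule B M \<longleftrightarrow>
     mzero M \<in> mcar M \<and>
     (\<forall>x\<in>mcar M. \<forall>y\<in>mcar M. madd M x y \<in> mcar M) \<and>
     (\<forall>h. \<forall>x\<in>mcar M. mact M h x \<in> mcar M) \<and>
     (\<forall>x\<in>mcar M. \<forall>y\<in>mcar M. \<forall>z\<in>mcar M. madd M (madd M x y) z = madd M x (madd M y z)) \<and>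
     (\<forall>x\<in>mcar M. \<forall>y\<in>mcar M. madd M x y = madd M y x) \<and>
     (\<forall>x\<in>mcar M. madd M (mzero M) x = x) \<and>
     (\<forall>x\<in>mcar M. \<exists>y\<in>mcar M. madd M x y = mzero M) \<and>
     (\<forall>x\<in>mcar M. mact M 1 x = x) \<and>
     (\<forall>h g. \<forall>x\<in>mcar M. mact M (h * g) x = mact M h (mact M g x)) \<and>
     (\<forall>h g. \<forall>x\<in>mcar M. mact M (h + g) x = madd M (mact M h x) (mact M g x)) \<and>
     (\<forall>h. \<forall>x\<in>mcar M. \<forall>y\<in>mcar M. mact M h (madd M x y) = madd M (mact M h x) (mact M h y))"

definition coassoc where
  "coassoc B M D \<longleftrightarrow> (\<forall>c\<in>mcar M.
     teq3 B M M M
       (fbind (D c) (\<lambda>(u, v). fpush (\<lambda>(x, y). (x, y, v)) (D u)))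
       (fbind (D c) (\<lambda>(u, v). fpush (\<lambda>(x, y). (u, x, y)) (D v))))"

text \<open>Counitality, using A (x)_A M = M (a (x) m = s(a) m) and M (x)_A A = M (m (x) a = t(a) m).\<close>
definition counital where
  "counital B M D E \<longleftrightarrow> (\<forall>c\<in>mcar M.
     msum M (\<lambda>p. mact M (scH B (D c p) 1 * src B (E (fst p))) (snd p)) (fsupp (D c)) = c \<and>
     msum M (\<lambda>p. mact M (scH B (D c p) 1 * tgt B (E (snd p))) (fst p)) (fsupp (D c)) = c)"

definition Hc :: "('k, 'a, 'h::ring_1) bialg \<Rightarrow> ('h, 'h, 'k, 'a) hcor" where
  "Hc B = \<lparr>mcar = UNIV, madd = (+), mzero = 0, mact = (*), mcop = cop B, mcou = cou B\<rparr>"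

definition bialgebroid :: "('k::field, 'a::ring_1, 'h::ring_1) bialg \<Rightarrow> bool" where
  "bialgebroid B \<longleftrightarrow>
     kalg (scA B) \<and> kalg (scH B) \<and>
     (\<forall>c a. src B (scA B c a) = scH B c (src B a)) \<and>
     (\<forall>a b. src B (a + b) = src B a + src B b) \<and>
     (\<forall>a b. src B (a * b) = src B a * src B b) \<and> src B 1 = 1 \<and>
     (\<forall>c a. tgt B (scA B c a) = scH B c (tgt B a)) \<and>
     (\<forall>a b. tgt B (a + b) = tgt B a + tgt B b) \<and>
     (\<forall>a b. tgt B (a * b) = tgt B b * tgt B a) \<and> tgt B 1 = 1 \<and>
     (\<forall>a b. src B a * tgt B b = tgt B b * src B a) \<and>
     \<comment> \<open>Delta: A-bilinear k-linear map into H (x)_A H\<close>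
     (\<forall>x. tsum (Hc B) (Hc B) (cop B x)) \<and>
     (\<forall>x y. teq B (Hc B) (Hc B) (cop B (x + y)) (\<lambda>p. cop B x p + cop B y p)) \<and>
     (\<forall>c x. teq B (Hc B) (Hc B) (cop B (scH B c x)) (\<lambda>p. c * cop B x p)) \<and>
     (\<forall>a b x. teq B (Hc B) (Hc B) (cop B (src B a * tgt B b * x))
         (fpush (\<lambda>(u, v). (src B a * u, tgt B b * v)) (cop B x))) \<and>
     \<comment> \<open>epsilon: A-bilinear k-linear map into A\<close>
     (\<forall>x y. cou B (x + y) = cou B x + cou B y) \<and>
     (\<forall>c x. cou B (scH B c x) = scA B c (cou B x)) \<and>
     (\<forall>a b x. cou B (src B a * tgt B b * x) = a * cou B x * b) \<and>
     \<comment> \<open>A-coring axioms\<close>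
     coassoc B (Hc B) (cop B) \<and> counital B (Hc B) (cop B) (cou B) \<and>
     \<comment> \<open>Delta lands in the Takeuchi product and is an algebra map\<close>
     (\<forall>x a. teq B (Hc B) (Hc B) (fpush (\<lambda>(u, v). (u * tgt B a, v)) (cop B x))
                                (fpush (\<lambda>(u, v). (u, v * src B a)) (cop B x))) \<and>
     (\<forall>x y. teq B (Hc B) (Hc B) (cop B (x * y)) (tact (Hc B) (Hc B) (cop B x) (cop B y))) \<and>
     teq B (Hc B) (Hc B) (cop B 1) (fdelta (1, 1)) \<and>
     \<comment> \<open>counit axioms\<close>
     (\<forall>x y. cou B (x * src B (cou B y)) = cou B (x * y)) \<and>
     (\<forall>x y. cou B (x * tgt B (cou B y)) = cou B (x * y)) \<and>
     cou B 1 = 1"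

definition module_coring :: "('k::field, 'a::ring_1, 'h::ring_1) bialg \<Rightarrow> ('h, 'm, 'k, 'a, 'z) hcor_scheme \<Rightarrow> bool" where
  "module_coring B C \<longleftrightarrow>
     hmodule B C \<and>
     (\<forall>c\<in>mcar C. tsum C C (mcop C c)) \<and>
     (\<forall>c\<in>mcar C. \<forall>c'\<in>mcar C. teq B C C (mcop C (madd C c c')) (\<lambda>p. mcop C c p + mcop C c' p)) \<and>
     (\<forall>h. \<forall>c\<in>mcar C. teq B C C (mcop C (mact C h c)) (tact C C (cop B h) (mcop C c))) \<and>
     (\<forall>c\<in>mcar C. \<forall>c'\<in>mcar C. mcou C (madd C c c') = mcou C c + mcou C c') \<and>
     (\<forall>h. \<forall>c\<in>mcar C. mcou C (mact C h c) = cou B (h * src B (mcou C c))) \<and>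
     coassoc B C (mcop C) \<and> counital B C (mcop C) (mcou C)"

definition mc_hom where
  "mc_hom B M N f \<longleftrightarrow>
     (\<forall>x\<in>mcar M. f x \<in> mcar N) \<and>
     (\<forall>x\<in>mcar M. \<forall>y\<in>mcar M. f (madd M x y) = madd N (f x) (f y)) \<and>
     (\<forall>h. \<forall>x\<in>mcar M. f (mact M h x) = mact N h (f x)) \<and>
     (\<forall>x\<in>mcar M. teq B N N (mcop N (f x)) (fpush (\<lambda>(u, v). (f u, f v)) (mcop M x))) \<and>
     (\<forall>x\<in>mcar M. mcou N (f x) = mcou M x)"

definition lideal_coideal :: "('k::field, 'a::ring_1, 'h::ring_1) bialg \<Rightarrow> 'h set \<Rightarrow> bool" where
  "lideal_coideal B I \<longleftrightarrow>
     0 \<in> I \<and> (\<forall>x\<in>I. \<forall>y\<in>I. x + y \<in> I) \<and> (\<forall>h. \<forall>x\<in>I. h * x \<in> I) \<and>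
     (\<forall>x\<in>I. cou B x = 0) \<and>
     (\<forall>x\<in>I. \<exists>\<psi>. tsum (Hc B) (Hc B) \<psi> \<and> fsupp \<psi> \<subseteq> (I \<times> UNIV) \<union> (UNIV \<times> I) \<and>
                 teq B (Hc B) (Hc B) (cop B x) \<psi>)"

definition qmap :: "'h::ring_1 set \<Rightarrow> 'h \<Rightarrow> 'h set" where
  "qmap I x = (\<lambda>i. x + i) ` I"

definition kerm where "kerm C \<pi> = {x. \<pi> x = mzero C}"

end

(*
  For a left ideal two-sided coideal I, the cosets H/I carry all the structure of
  H, computed on representatives: the action is well defined because I is a left ideal, the
  counit because it vanishes on I, and the comultiplication because Delta(I) lies in
  I (x)_A H + H (x)_A I, which the projection q (x) q kills. Conversely, the kernel K of a
  surjective morphism pi : H -> C of left H-module corings is a left ideal on which the counit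
  vanishes, and it is a coideal by right exactness of (x)_A: for x in K, (pi (x) pi) Delta(x)
  is Delta_C(pi x) = 0, and every element of H (x)_A H killed by pi (x) pi lies in
  K (x)_A H + H (x)_A K. Since q and pi have the same fibres, pi factors through q by a
  bijective morphism of module corings.
*)
theory Submission
  imports Defs "HOL-Library.Set_Algebras"
begin

section \<open>Formal sums\<close>

lemma fsupp_fdelta [simp]: "fsupp (fdelta p :: _ \<Rightarrow> 'k::zero_neq_one) = {p}"
  by (auto simp: fsupp_def fdelta_def)

lemma fbind_eq_sum:
  assumes "finite S" "fsupp \<phi> \<subseteq> S"
  shows "fbind \<phi> F y = (\<Sum>p\<in>S. \<phi> p * F p y)"
  unfolding fbind_def
  by (rule sum.mono_neutral_left) (use assms in \<open>auto simp: fsupp_def\<close>)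

lemma fpush_eq_sum:
  assumes "finite S" "fsupp \<phi> \<subseteq> S"
  shows "fpush f \<phi> y = (\<Sum>p\<in>S. \<phi> p * fdelta (f p) y)"
  unfolding fpush_def by (rule fbind_eq_sum[OF assms])

lemma fsupp_fpush: "fsupp (fpush f \<phi>) \<subseteq> f ` fsupp \<phi>"
  by (auto simp: fsupp_def fpush_def fbind_def fdelta_def intro!: sum.neutral)

lemma finite_fsupp_fpush [simp]: "finite (fsupp \<phi>) \<Longrightarrow> finite (fsupp (fpush f \<phi>))"
  by (rule finite_subset[OF fsupp_fpush]) simp

lemma finite_fsupp_add [simp]:
  fixes \<phi> \<psi> :: "_ \<Rightarrow> 'k::comm_ring_1"
  shows "finite (fsupp \<phi>) \<Longrightarrow> finite (fsupp \<psi>) \<Longrightarrow> finite (fsupp (\<lambda>p. \<phi> p + \<psi> p))"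
  by (rule finite_subset[of _ "fsupp \<phi> \<union> fsupp \<psi>"]) (auto simp: fsupp_def)

lemma finite_fsupp_diff [simp]:
  fixes \<phi> \<psi> :: "_ \<Rightarrow> 'k::comm_ring_1"
  shows "finite (fsupp \<phi>) \<Longrightarrow> finite (fsupp \<psi>) \<Longrightarrow> finite (fsupp (\<lambda>p. \<phi> p - \<psi> p))"
  by (rule finite_subset[of _ "fsupp \<phi> \<union> fsupp \<psi>"]) (auto simp: fsupp_def)

lemma finite_fsupp_mult [simp]:
  fixes \<phi> :: "_ \<Rightarrow> 'k::comm_ring_1"
  shows "finite (fsupp \<phi>) \<Longrightarrow> finite (fsupp (\<lambda>p. c * \<phi> p))"
  by (rule finite_subset[of _ "fsupp \<phi>"]) (auto simp: fsupp_def)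

lemma fpush_zero [simp]: "fpush f (\<lambda>_. 0) = (\<lambda>_. 0)"
  by (simp add: fpush_def fbind_def fsupp_def)

lemma fpush_fdelta [simp]: "fpush f (fdelta p) = (fdelta (f p) :: _ \<Rightarrow> 'k::comm_ring_1)"
  by (rule ext) (simp add: fpush_eq_sum[of "{p}"] fsupp_def fdelta_def)

lemma fpush_linear:
  assumes "finite (fsupp \<phi>)" "finite (fsupp \<psi>)"
  shows "fpush f (\<lambda>q. a * \<phi> q + b * \<psi> q) = (\<lambda>y. a * fpush f \<phi> y + b * fpush f \<psi> y)"
proof
  fix y
  let ?S = "fsupp \<phi> \<union> fsupp \<psi>"
  have "fsupp (\<lambda>q. a * \<phi> q + b * \<psi> q) \<subseteq> ?S" by (auto simp: fsupp_def)
  then have "fpush f (\<lambda>q. a * \<phi> q + b * \<psi> q) y = (\<Sum>p\<in>?S. (a * \<phi> p + b * \<psi> p) * fdelta (f p) y)"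
    using assms by (intro fpush_eq_sum) auto
  also have "\<dots> = a * (\<Sum>p\<in>?S. \<phi> p * fdelta (f p) y) + b * (\<Sum>p\<in>?S. \<psi> p * fdelta (f p) y)"
    by (simp add: sum.distrib sum_distrib_left algebra_simps)
  also have "\<dots> = a * fpush f \<phi> y + b * fpush f \<psi> y"
    using assms by (simp add: fpush_eq_sum[of ?S])
  finally show "fpush f (\<lambda>q. a * \<phi> q + b * \<psi> q) y = a * fpush f \<phi> y + b * fpush f \<psi> y" .
qed

lemma fpush_add [simp]:
  "finite (fsupp \<phi>) \<Longrightarrow> finite (fsupp \<psi>) \<Longrightarrow>
   fpush f (\<lambda>q. \<phi> q + \<psi> q) = (\<lambda>y. fpush f \<phi> y + fpush f \<psi> y)"
  using fpush_linear[of \<phi> \<psi> f 1 1] by simp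

lemma fpush_diff [simp]:
  "finite (fsupp \<phi>) \<Longrightarrow> finite (fsupp \<psi>) \<Longrightarrow>
   fpush f (\<lambda>q. \<phi> q - \<psi> q) = (\<lambda>y. fpush f \<phi> y - fpush f \<psi> y)"
  using fpush_linear[of \<phi> \<psi> f 1 "-1"] by simp

lemma fpush_mult [simp]:
  "finite (fsupp \<phi>) \<Longrightarrow> fpush f (\<lambda>q. c * \<phi> q) = (\<lambda>y. c * fpush f \<phi> y)"
  using fpush_linear[of \<phi> \<phi> f c 0] by simp

lemma fbind_fpush:
  assumes fin: "finite (fsupp \<phi>)"
  shows "fbind (fpush f \<phi>) F = fbind \<phi> (\<lambda>p. F (f p))"
proof
  fix y
  let ?S = "fsupp \<phi>" and ?T = "f ` fsupp \<phi>"
  have "fbind (fpush f \<phi>) F y = (\<Sum>P\<in>?T. fpush f \<phi> P * F P y)"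
    using fin fsupp_fpush[of f \<phi>] by (intro fbind_eq_sum) auto
  also have "\<dots> = (\<Sum>p\<in>?S. \<Sum>P\<in>?T. \<phi> p * fdelta (f p) P * F P y)"
    using fin by (simp add: fpush_eq_sum[of ?S] sum_distrib_right sum.swap[of _ ?T])
  also have "\<dots> = (\<Sum>p\<in>?S. \<Sum>P\<in>?T. if P = f p then \<phi> p * F P y else 0)"
    by (intro sum.cong refl) (simp add: fdelta_def)
  also have "\<dots> = (\<Sum>p\<in>?S. \<phi> p * F (f p) y)"
    using fin by (simp add: sum.delta')
  finally show "fbind (fpush f \<phi>) F y = fbind \<phi> (\<lambda>p. F (f p)) y" by (simp add: fbind_def)
qed

lemma fpush_fpush:
  fixes \<phi> :: "_ \<Rightarrow> 'k::comm_ring_1"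
  shows "finite (fsupp \<phi>) \<Longrightarrow> fpush g (fpush f \<phi>) = fpush (\<lambda>p. g (f p)) \<phi>"
  by (simp add: fpush_def[of g] fbind_fpush fpush_def[of "\<lambda>p. g (f p)"])

lemma sum_fsupp_fpush:
  fixes \<phi> :: "'x \<Rightarrow> 'k::comm_ring_1" and \<Phi> :: "'k \<Rightarrow> 'y \<Rightarrow> 'b::comm_monoid_add"
  assumes fin: "finite (fsupp \<phi>)"
    and zero: "\<And>P. \<Phi> 0 P = 0" and add: "\<And>a b P. \<Phi> (a + b) P = \<Phi> a P + \<Phi> b P"
  shows "(\<Sum>P\<in>fsupp (fpush f \<phi>). \<Phi> (fpush f \<phi> P) P) = (\<Sum>p\<in>fsupp \<phi>. \<Phi> (\<phi> p) (f p))"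
proof -
  let ?S = "fsupp \<phi>"
  have \<Phi>_sum: "finite F \<Longrightarrow> \<Phi> (sum g F) P = (\<Sum>p\<in>F. \<Phi> (g p) P)" for g F P
    by (induction F rule: finite_induct) (simp_all add: zero add)
  have fibre: "fpush f \<phi> P = (\<Sum>p\<in>{p\<in>?S. f p = P}. \<phi> p)" for P
    using fin
    by (auto simp: fpush_eq_sum[OF fin order_refl] fdelta_def sum.inter_filter intro!: sum.cong)
  have "(\<Sum>P\<in>fsupp (fpush f \<phi>). \<Phi> (fpush f \<phi> P) P) = (\<Sum>P\<in>f ` ?S. \<Phi> (fpush f \<phi> P) P)"
    using fin fsupp_fpush[of f \<phi>] by (intro sum.mono_neutral_left) (auto simp: fsupp_def zero)
  also have "\<dots> = (\<Sum>P\<in>f ` ?S. \<Sum>p\<in>{p\<in>?S. f p = P}. \<Phi> (\<phi> p) (f p))"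
    using fin by (intro sum.cong refl) (simp add: fibre \<Phi>_sum)
  also have "\<dots> = (\<Sum>p\<in>?S. \<Phi> (\<phi> p) (f p))"
    using fin by (rule sum.image_gen[symmetric])
  finally show ?thesis .
qed

lemma fsupp_fbind: "fsupp (fbind \<Phi> F) \<subseteq> (\<Union>p\<in>fsupp \<Phi>. fsupp (F p))"
  by (auto simp: fsupp_def fbind_def intro!: sum.neutral)

lemma finite_fsupp_fbind:
  "finite (fsupp \<Phi>) \<Longrightarrow> (\<And>p. p \<in> fsupp \<Phi> \<Longrightarrow> finite (fsupp (F p))) \<Longrightarrow>
   finite (fsupp (fbind \<Phi> F))"
  by (rule finite_subset[OF fsupp_fbind]) auto

lemma fpush_fbind:
  assumes fin: "finite (fsupp \<Phi>)" and finF: "\<And>p. p \<in> fsupp \<Phi> \<Longrightarrow> finite (fsupp (F p))"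
  shows "fpush f (fbind \<Phi> F) = fbind \<Phi> (\<lambda>p. fpush f (F p))"
proof
  fix y
  let ?U = "\<Union>p\<in>fsupp \<Phi>. fsupp (F p)"
  have U: "finite ?U" using fin finF by auto
  have "fpush f (fbind \<Phi> F) y = (\<Sum>z\<in>?U. \<Sum>p\<in>fsupp \<Phi>. \<Phi> p * F p z * fdelta (f z) y)"
    using U fsupp_fbind[of \<Phi> F] by (simp add: fpush_eq_sum[of ?U] fbind_def sum_distrib_right)
  also have "\<dots> = (\<Sum>p\<in>fsupp \<Phi>. \<Phi> p * (\<Sum>z\<in>?U. F p z * fdelta (f z) y))"
    by (subst sum.swap) (simp add: sum_distrib_left mult.assoc)
  also have "\<dots> = (\<Sum>p\<in>fsupp \<Phi>. \<Phi> p * fpush f (F p) y)"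
    using U by (intro sum.cong refl) (subst fpush_eq_sum[of ?U], auto)
  finally show "fpush f (fbind \<Phi> F) y = fbind \<Phi> (\<lambda>p. fpush f (F p)) y" by (simp add: fbind_def)
qed

lemma fbind_fdelta:
  fixes \<phi> :: "_ \<Rightarrow> 'k::comm_ring_1"
  assumes "finite (fsupp \<phi>)"
  shows "fbind \<phi> fdelta = \<phi>"
proof
  fix y
  have "fbind \<phi> fdelta y = (\<Sum>p\<in>fsupp \<phi>. if p = y then \<phi> y else 0)"
    unfolding fbind_def by (intro sum.cong) (auto simp: fdelta_def)
  also have "\<dots> = \<phi> y" using assms by (auto simp: sum.delta' fsupp_def)
  finally show "fbind \<phi> fdelta y = \<phi> y" .
qed

lemma fbind_add: "fbind \<Phi> (\<lambda>p y. F p y + G p y) = (\<lambda>y. fbind \<Phi> F y + fbind \<Phi> G y)"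
  by (simp add: fbind_def sum.distrib distrib_left)

lemma fbind_diff: "fbind \<Phi> (\<lambda>p y. F p y - G p y) = (\<lambda>y. fbind \<Phi> F y - fbind \<Phi> G y)"
  by (simp add: fbind_def sum_subtractf right_diff_distrib)

inductive fspan :: "('x \<Rightarrow> 'k::comm_ring_1) set \<Rightarrow> ('x \<Rightarrow> 'k) \<Rightarrow> bool" for G where
  fspan_zero: "fspan G (\<lambda>_. 0)"
| fspan_step: "g \<in> G \<Longrightarrow> fspan G \<phi> \<Longrightarrow> fspan G (\<lambda>p. \<phi> p + c * g p)"

definition fcong :: "('x \<Rightarrow> 'k::comm_ring_1) set \<Rightarrow> ('x \<Rightarrow> 'k) \<Rightarrow> ('x \<Rightarrow> 'k) \<Rightarrow> bool" where
  "fcong G \<phi> \<psi> \<longleftrightarrow> fspan G (\<lambda>p. \<phi> p - \<psi> p)"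

lemma fspan_gen: "g \<in> G \<Longrightarrow> fspan G g"
  using fspan_step[OF _ fspan_zero, of g G 1] by simp

lemma fspan_add:
  assumes "fspan G \<phi>"
  shows "fspan G \<psi> \<Longrightarrow> fspan G (\<lambda>p. \<phi> p + \<psi> p)"
proof (induction rule: fspan.induct)
  case (fspan_step g \<psi> c)
  then show ?case using fspan.fspan_step[of g G "\<lambda>p. \<phi> p + \<psi> p" c] by (simp add: add.assoc)
qed (simp add: assms)

lemma fspan_mult: "fspan G \<phi> \<Longrightarrow> fspan G (\<lambda>p. c * \<phi> p)"
proof (induction rule: fspan.induct)
  case (fspan_step g \<phi> d)
  then show ?case
    using fspan.fspan_step[of g G "\<lambda>p. c * \<phi> p" "c * d"] by (simp add: algebra_simps)
qed (simp add: fspan_zero)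

lemma fspan_diff: "fspan G \<phi> \<Longrightarrow> fspan G \<psi> \<Longrightarrow> fspan G (\<lambda>p. \<phi> p - \<psi> p)"
  using fspan_add[of G \<phi> "\<lambda>p. (-1) * \<psi> p"] fspan_mult[of G \<psi> "-1"] by simp

lemma fspan_sum:
  "finite S \<Longrightarrow> (\<And>i. i \<in> S \<Longrightarrow> fspan G (F i)) \<Longrightarrow> fspan G (\<lambda>p. \<Sum>i\<in>S. c i * F i p)"
proof (induction S rule: finite_induct)
  case (insert i S)
  then have "fspan G (\<lambda>p. c i * F i p + (\<Sum>i\<in>S. c i * F i p))"
    by (intro fspan_add fspan_mult) auto
  then show ?case using insert.hyps by simp
qed (simp add: fspan_zero)

lemma fspan_fbind:
  "finite (fsupp \<Phi>) \<Longrightarrow> (\<And>p. p \<in> fsupp \<Phi> \<Longrightarrow> fspan G (F p)) \<Longrightarrow> fspan G (fbind \<Phi> F)"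
  unfolding fbind_def by (rule fspan_sum)

lemma fspan_finite:
  assumes "\<And>g. g \<in> G \<Longrightarrow> finite (fsupp g)"
  shows "fspan G \<phi> \<Longrightarrow> finite (fsupp \<phi>)"
  by (induction rule: fspan.induct) (simp add: fsupp_def, simp add: assms)

lemma fspan_fpush:
  assumes fin: "\<And>g. g \<in> G \<Longrightarrow> finite (fsupp g)"
    and push: "\<And>g. g \<in> G \<Longrightarrow> fspan G' (fpush f g)"
  shows "fspan G \<phi> \<Longrightarrow> fspan G' (fpush f \<phi>)"
proof (induction rule: fspan.induct)
  case (fspan_step g \<phi> c)
  then show ?case
    using fspan_finite[OF fin] fin by (simp add: fspan_add fspan_mult push)
qed (simp add: fspan_zero)

lemma fspan_lift:
  assumes fin: "\<And>g. g \<in> G \<Longrightarrow> finite (fsupp g)"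
    and onto: "\<And>g'. g' \<in> G' \<Longrightarrow> \<exists>g\<in>G. fpush f g = g'"
  shows "fspan G' \<chi> \<Longrightarrow> \<exists>\<theta>. fspan G \<theta> \<and> fpush f \<theta> = \<chi>"
proof (induction rule: fspan.induct)
  case fspan_zero
  show ?case using fspan.fspan_zero by fastforce
next
  case (fspan_step g' \<chi> c)
  then obtain \<theta> g where "fspan G \<theta>" "fpush f \<theta> = \<chi>" "g \<in> G" "fpush f g = g'"
    using onto by blast
  then show ?case
    using fspan.fspan_step[of g G \<theta> c] fspan_finite[OF fin] fin
    by (intro exI[of _ "\<lambda>p. \<theta> p + c * g p"]) simp
qed

lemma fcong_refl: "fcong G \<phi> \<phi>"
  by (simp add: fcong_def fspan_zero)

lemma fcong_sym: "fcong G \<phi> \<psi> \<Longrightarrow> fcong G \<psi> \<phi>"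
  unfolding fcong_def using fspan_mult[of G "\<lambda>p. \<phi> p - \<psi> p" "-1"] by simp

lemma fcong_trans: "fcong G \<phi> \<psi> \<Longrightarrow> fcong G \<psi> \<chi> \<Longrightarrow> fcong G \<phi> \<chi>"
  unfolding fcong_def using fspan_add[of G "\<lambda>p. \<phi> p - \<psi> p" "\<lambda>p. \<psi> p - \<chi> p"] by simp

lemma fcong_add:
  "fcong G \<phi> \<psi> \<Longrightarrow> fcong G \<phi>' \<psi>' \<Longrightarrow> fcong G (\<lambda>p. \<phi> p + \<phi>' p) (\<lambda>p. \<psi> p + \<psi>' p)"
  unfolding fcong_def using fspan_add[of G "\<lambda>p. \<phi> p - \<psi> p" "\<lambda>p. \<phi>' p - \<psi>' p"]
  by (simp add: algebra_simps)

lemma fcong_fbind: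
  "finite (fsupp \<Phi>) \<Longrightarrow> (\<And>p. p \<in> fsupp \<Phi> \<Longrightarrow> fcong G (F p) (H p)) \<Longrightarrow>
   fcong G (fbind \<Phi> F) (fbind \<Phi> H)"
  unfolding fcong_def fbind_diff[symmetric] by (rule fspan_fbind)

lemma fcong_fpush:
  assumes "\<And>g. g \<in> G \<Longrightarrow> finite (fsupp g)" "\<And>g. g \<in> G \<Longrightarrow> fspan G' (fpush f g)"
    and "fcong G \<phi> \<psi>" "finite (fsupp \<phi>)" "finite (fsupp \<psi>)"
  shows "fcong G' (fpush f \<phi>) (fpush f \<psi>)"
  using fspan_fpush[OF assms(1,2) assms(3)[unfolded fcong_def]] assms(4,5) by (simp add: fcong_def)

definition hmod_hom ::
    "('h, 'm, 'z1) hmod_scheme \<Rightarrow> ('h, 'n, 'z2) hmod_scheme \<Rightarrow> ('m \<Rightarrow> 'n) \<Rightarrow> bool" where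
  "hmod_hom M M' f \<longleftrightarrow> (\<forall>x\<in>mcar M. f x \<in> mcar M') \<and>
     (\<forall>x\<in>mcar M. \<forall>y\<in>mcar M. f (madd M x y) = madd M' (f x) (f y)) \<and>
     (\<forall>h. \<forall>x\<in>mcar M. f (mact M h x) = mact M' h (f x))"

lemma hmod_homD:
  assumes "hmod_hom M M' f"
  shows "x \<in> mcar M \<Longrightarrow> f x \<in> mcar M'"
    and "x \<in> mcar M \<Longrightarrow> y \<in> mcar M \<Longrightarrow> f (madd M x y) = madd M' (f x) (f y)"
    and "x \<in> mcar M \<Longrightarrow> f (mact M h x) = mact M' h (f x)"
    and "x \<in> mcar M \<Longrightarrow> f (msc B M c x) = msc B M' c (f x)"
  using assms by (auto simp: hmod_hom_def msc_def)

lemma hmodule_cancel: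
  assumes M: "hmodule B M" and z: "z \<in> mcar M" and y: "y \<in> mcar M" and e: "madd M z y = y"
  shows "z = mzero M"
proof -
  have "\<forall>x\<in>mcar M. \<exists>y\<in>mcar M. madd M x y = mzero M" using M by (simp add: hmodule_def)
  with y obtain y' where y': "y' \<in> mcar M" "madd M y y' = mzero M" by blast
  have "z = madd M z (madd M y y')"
    using M z y' unfolding hmodule_def by metis
  also have "\<dots> = madd M (madd M z y) y'"
    using M z y y' unfolding hmodule_def by metis
  finally show ?thesis using e y' by simp
qed

lemma hmodule_zero_add [simp]: "hmodule B M \<Longrightarrow> madd M (mzero M) (mzero M) = mzero M"
  by (simp add: hmodule_def)

lemma hmodule_mact_zero:
  assumes M: "hmodule B M"
  shows "mact M h (mzero M) = mzero M"
proof -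
  have z: "mzero M \<in> mcar M" and a: "mact M h (mzero M) \<in> mcar M"
    using M by (auto simp: hmodule_def)
  have "madd M (mact M h (mzero M)) (mact M h (mzero M)) = mact M h (madd M (mzero M) (mzero M))"
    using M z unfolding hmodule_def by metis
  then show ?thesis using hmodule_cancel[OF M a a] M by simp
qed

lemma hmod_hom_zero:
  assumes "hmodule B M" "hmodule B N" "hmod_hom M N f"
  shows "f (mzero M) = mzero N"
proof -
  have z: "mzero M \<in> mcar M" using assms(1) by (simp add: hmodule_def)
  have "madd N (f (mzero M)) (f (mzero M)) = f (mzero M)"
    using hmod_homD(2)[OF assms(3) z z] assms(1) by simp
  then show ?thesis using hmodule_cancel[OF assms(2)] hmod_homD(1)[OF assms(3) z] by blast
qed

lemma Hc_simps [simp]: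
  "mcar (Hc B) = UNIV" "madd (Hc B) = (+)" "mzero (Hc B) = 0" "mact (Hc B) = (*)"
  "mcop (Hc B) = cop B" "mcou (Hc B) = cou B"
  by (simp_all add: Hc_def)

lemma hmodule_Hc: "hmodule B (Hc B)"
  by (auto simp: hmodule_def algebra_simps intro: exI[of _ "- x" for x])

lemma fold_add_eq_sum:
  fixes g :: "_ \<Rightarrow> 'b::comm_monoid_add"
  assumes "finite S"
  shows "Finite_Set.fold (\<lambda>x acc. g x + acc) z S = z + sum g S"
proof -
  interpret comp_fun_commute "\<lambda>x acc. g x + acc"
    by standard (auto simp: add_ac)
  show ?thesis using assms
    by (induction S rule: finite_induct) (simp_all add: fold_insert add.left_commute)
qed

lemma msum_Hc: "finite S \<Longrightarrow> msum (Hc B) f S = sum f S"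
  by (simp add: msum_def fold_add_eq_sum)

lemma mc_hom_hmod_hom: "mc_hom B M N f \<Longrightarrow> hmod_hom M N f"
  by (simp add: mc_hom_def hmod_hom_def)

lemma mc_hom_HcD:
  assumes "mc_hom B (Hc B) C f"
  shows "f x \<in> mcar C" "f (x + y) = madd C (f x) (f y)" "f (h * x) = mact C h (f x)"
    "teq B C C (mcop C (f x)) (fpush (\<lambda>(u, v). (f u, f v)) (cop B x))"
    "mcou C (f x) = cou B x"
  using assms by (simp_all add: mc_hom_def)

lemma bialgebroidD:
  assumes "bialgebroid B"
  shows "finite (fsupp (cop B x))"
    "teq B (Hc B) (Hc B) (cop B (x + y)) (\<lambda>p. cop B x p + cop B y p)"
    "teq B (Hc B) (Hc B) (cop B (x * y)) (tact (Hc B) (Hc B) (cop B x) (cop B y))"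
    "cou B (x + y) = cou B x + cou B y"
    "cou B (x * src B (cou B y)) = cou B (x * y)"
    "coassoc B (Hc B) (cop B)" "counital B (Hc B) (cop B) (cou B)"
    "kalg (scH B)"
  using assms unfolding bialgebroid_def tsum_def by simp_all

lemma module_coringD:
  assumes "module_coring B C"
  shows "hmodule B C" "c \<in> mcar C \<Longrightarrow> finite (fsupp (mcop C c))"
    "c \<in> mcar C \<Longrightarrow> c' \<in> mcar C \<Longrightarrow>
       teq B C C (mcop C (madd C c c')) (\<lambda>p. mcop C c p + mcop C c' p)"
    "c \<in> mcar C \<Longrightarrow> c' \<in> mcar C \<Longrightarrow> mcou C (madd C c c') = mcou C c + mcou C c'"
  using assms unfolding module_coring_def tsum_def by simp_all

section \<open>Tensor products\<close>

lemma tnull_eq_fspan: "tnull B M N = fspan (tgen B M N)"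
proof (intro ext iffI)
  show "tnull B M N \<phi> \<Longrightarrow> fspan (tgen B M N) \<phi>" for \<phi>
    by (induction rule: tnull.induct) (auto intro: fspan.intros)
  show "fspan (tgen B M N) \<phi> \<Longrightarrow> tnull B M N \<phi>" for \<phi>
    by (induction rule: fspan.induct) (auto intro: tnull.intros)
qed

lemma tnull3_eq_fspan: "tnull3 B M N P = fspan (tgen3 B M N P)"
proof (intro ext iffI)
  show "tnull3 B M N P \<phi> \<Longrightarrow> fspan (tgen3 B M N P) \<phi>" for \<phi>
    by (induction rule: tnull3.induct) (auto intro: fspan.intros)
  show "fspan (tgen3 B M N P) \<phi> \<Longrightarrow> tnull3 B M N P \<phi>" for \<phi>
    by (induction rule: fspan.induct) (auto intro: tnull3.intros)
qed

lemma teq_fcong: "teq B M N = fcong (tgen B M N)"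
  by (simp add: fun_eq_iff teq_def fcong_def tnull_eq_fspan)

lemma teq3_fcong: "teq3 B M N P = fcong (tgen3 B M N P)"
  by (simp add: fun_eq_iff teq3_def fcong_def tnull3_eq_fspan)

lemmas teq_refl = fcong_refl[of "tgen B M N" for B M N, folded teq_fcong]
lemmas teq_sym = fcong_sym[of "tgen B M N" for B M N, folded teq_fcong]
lemmas teq_trans [trans] = fcong_trans[of "tgen B M N" for B M N, folded teq_fcong]
lemmas teq_add = fcong_add[of "tgen B M N" for B M N, folded teq_fcong]
lemmas teq3_sym = fcong_sym[of "tgen3 B M N P" for B M N P, folded teq3_fcong]
lemmas teq3_trans [trans] = fcong_trans[of "tgen3 B M N P" for B M N P, folded teq3_fcong]
lemmas teq3_fbind = fcong_fbind[of _ "tgen3 B M N P" for B M N P, folded teq3_fcong]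

lemma finite_fsupp_tgen: "g \<in> tgen B M N \<Longrightarrow> finite (fsupp g)"
  unfolding tgen_def by auto

lemma finite_fsupp_tgen3: "g \<in> tgen3 B M N P \<Longrightarrow> finite (fsupp g)"
  unfolding tgen3_def by auto

lemma tgenI:
  "m \<in> mcar M \<Longrightarrow> m' \<in> mcar M \<Longrightarrow> n \<in> mcar N \<Longrightarrow>
   (\<lambda>q. fdelta (madd M m m', n) q - fdelta (m, n) q - fdelta (m', n) q) \<in> tgen B M N"
  "m \<in> mcar M \<Longrightarrow> n \<in> mcar N \<Longrightarrow> n' \<in> mcar N \<Longrightarrow>
   (\<lambda>q. fdelta (m, madd N n n') q - fdelta (m, n) q - fdelta (m, n') q) \<in> tgen B M N"
  "m \<in> mcar M \<Longrightarrow> n \<in> mcar N \<Longrightarrow>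
   (\<lambda>q. fdelta (msc B M c m, n) q - c * fdelta (m, n) q) \<in> tgen B M N"
  "m \<in> mcar M \<Longrightarrow> n \<in> mcar N \<Longrightarrow>
   (\<lambda>q. fdelta (m, msc B N c n) q - c * fdelta (m, n) q) \<in> tgen B M N"
  "m \<in> mcar M \<Longrightarrow> n \<in> mcar N \<Longrightarrow>
   (\<lambda>q. fdelta (mact M (tgt B a) m, n) q - fdelta (m, mact N (src B a) n) q) \<in> tgen B M N"
  unfolding tgen_def by fast+

lemma tgen3I:
  "m \<in> mcar M \<Longrightarrow> m' \<in> mcar M \<Longrightarrow> n \<in> mcar N \<Longrightarrow> r \<in> mcar P \<Longrightarrow>
   (\<lambda>q. fdelta (madd M m m', n, r) q - fdelta (m, n, r) q - fdelta (m', n, r) q) \<in> tgen3 B M N P"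
  "m \<in> mcar M \<Longrightarrow> n \<in> mcar N \<Longrightarrow> n' \<in> mcar N \<Longrightarrow> r \<in> mcar P \<Longrightarrow>
   (\<lambda>q. fdelta (m, madd N n n', r) q - fdelta (m, n, r) q - fdelta (m, n', r) q) \<in> tgen3 B M N P"
  "m \<in> mcar M \<Longrightarrow> n \<in> mcar N \<Longrightarrow> r \<in> mcar P \<Longrightarrow> r' \<in> mcar P \<Longrightarrow>
   (\<lambda>q. fdelta (m, n, madd P r r') q - fdelta (m, n, r) q - fdelta (m, n, r') q) \<in> tgen3 B M N P"
  "m \<in> mcar M \<Longrightarrow> n \<in> mcar N \<Longrightarrow> r \<in> mcar P \<Longrightarrow>
   (\<lambda>q. fdelta (msc B M c m, n, r) q - c * fdelta (m, n, r) q) \<in> tgen3 B M N P"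
  "m \<in> mcar M \<Longrightarrow> n \<in> mcar N \<Longrightarrow> r \<in> mcar P \<Longrightarrow>
   (\<lambda>q. fdelta (m, msc B N c n, r) q - c * fdelta (m, n, r) q) \<in> tgen3 B M N P"
  "m \<in> mcar M \<Longrightarrow> n \<in> mcar N \<Longrightarrow> r \<in> mcar P \<Longrightarrow>
   (\<lambda>q. fdelta (m, n, msc B P c r) q - c * fdelta (m, n, r) q) \<in> tgen3 B M N P"
  "m \<in> mcar M \<Longrightarrow> n \<in> mcar N \<Longrightarrow> r \<in> mcar P \<Longrightarrow>
   (\<lambda>q. fdelta (mact M (tgt B a) m, n, r) q - fdelta (m, mact N (src B a) n, r) q) \<in> tgen3 B M N P"
  "m \<in> mcar M \<Longrightarrow> n \<in> mcar N \<Longrightarrow> r \<in> mcar P \<Longrightarrow>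
   (\<lambda>q. fdelta (m, mact N (tgt B a) n, r) q - fdelta (m, n, mact P (src B a) r) q) \<in> tgen3 B M N P"
  unfolding tgen3_def by fast+

lemma tgen_fpush:
  assumes "g \<in> tgen B M N" and f: "hmod_hom M M' f" and f': "hmod_hom N N' f'"
  shows "fpush (\<lambda>(x, y). (f x, f' y)) g \<in> tgen B M' N'"
  using assms(1)[unfolded tgen_def]
  by (elim UnE CollectE exE conjE; hypsubst; simp add: hmod_homD[OF f] hmod_homD[OF f'] tgenI)

lemma tgen3_fpush:
  assumes "g \<in> tgen3 B M N P"
    and f: "hmod_hom M M' f" and f': "hmod_hom N N' f'" and f'': "hmod_hom P P' f''"
  shows "fpush (\<lambda>(x, y, z). (f x, f' y, f'' z)) g \<in> tgen3 B M' N' P'"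
  using assms(1)[unfolded tgen3_def]
  by (elim UnE CollectE exE conjE; hypsubst;
      simp add: hmod_homD[OF f] hmod_homD[OF f'] hmod_homD[OF f''] tgen3I)

lemma tgen_fpush_right_slot:
  assumes "g \<in> tgen B M N" "r \<in> mcar P"
  shows "fpush (\<lambda>(x, y). (x, y, r)) g \<in> tgen3 B M N P"
  using assms(1)[unfolded tgen_def] assms(2)
  by (elim UnE CollectE exE conjE; hypsubst; simp add: tgen3I)

lemma tgen_fpush_left_slot:
  assumes "g \<in> tgen B N P" "m \<in> mcar M"
  shows "fpush (\<lambda>(x, y). (m, x, y)) g \<in> tgen3 B M N P"
  using assms(1)[unfolded tgen_def] assms(2)
  by (elim UnE CollectE exE conjE; hypsubst; simp add: tgen3I)

lemma teq_fpush:
  assumes "teq B M N \<phi> \<psi>" "finite (fsupp \<phi>)" "finite (fsupp \<psi>)"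
    and "hmod_hom M M' f" "hmod_hom N N' f'"
  shows "teq B M' N' (fpush (\<lambda>(x, y). (f x, f' y)) \<phi>) (fpush (\<lambda>(x, y). (f x, f' y)) \<psi>)"
  using assms unfolding teq_fcong
  by (intro fcong_fpush fspan_gen tgen_fpush) (auto intro: finite_fsupp_tgen)

lemma teq3_fpush:
  assumes "teq3 B M N P \<phi> \<psi>" "finite (fsupp \<phi>)" "finite (fsupp \<psi>)"
    and "hmod_hom M M' f" "hmod_hom N N' f'" "hmod_hom P P' f''"
  shows "teq3 B M' N' P' (fpush (\<lambda>(x, y, z). (f x, f' y, f'' z)) \<phi>)
                         (fpush (\<lambda>(x, y, z). (f x, f' y, f'' z)) \<psi>)"
  using assms unfolding teq3_fcong
  by (intro fcong_fpush fspan_gen tgen3_fpush) (auto intro: finite_fsupp_tgen3)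

lemma teq_fpush_right_slot:
  assumes "teq B M N \<phi> \<psi>" "finite (fsupp \<phi>)" "finite (fsupp \<psi>)" "r \<in> mcar P"
  shows "teq3 B M N P (fpush (\<lambda>(x, y). (x, y, r)) \<phi>) (fpush (\<lambda>(x, y). (x, y, r)) \<psi>)"
  using assms unfolding teq_fcong teq3_fcong
  by (intro fcong_fpush fspan_gen tgen_fpush_right_slot) (auto intro: finite_fsupp_tgen)

lemma teq_fpush_left_slot:
  assumes "teq B N P \<phi> \<psi>" "finite (fsupp \<phi>)" "finite (fsupp \<psi>)" "m \<in> mcar M"
  shows "teq3 B M N P (fpush (\<lambda>(x, y). (m, x, y)) \<phi>) (fpush (\<lambda>(x, y). (m, x, y)) \<psi>)"
  using assms unfolding teq_fcong teq3_fcong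
  by (intro fcong_fpush fspan_gen tgen_fpush_left_slot) (auto intro: finite_fsupp_tgen)

lemma tact_fpush:
  fixes \<Phi> \<psi> :: "_ \<Rightarrow> 'k::comm_ring_1"
  assumes fin: "finite (fsupp \<Phi>)" "finite (fsupp \<psi>)"
    and f: "\<And>h x. f (mact M h x) = mact M' h (f x)" and g: "\<And>h y. g (mact N h y) = mact N' h (g y)"
  shows "tact M' N' \<Phi> (fpush (\<lambda>(x, y). (f x, g y)) \<psi>)
       = fpush (\<lambda>(x, y). (f x, g y)) (tact M N \<Phi> \<psi>)"
proof -
  have "tact M' N' \<Phi> (fpush (\<lambda>(x, y). (f x, g y)) \<psi>)
      = fbind \<Phi> (\<lambda>p. fpush (\<lambda>(x, y). (f x, g y))
          (fpush (\<lambda>(x, y). (mact M (fst p) x, mact N (snd p) y)) \<psi>))"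
    unfolding tact_def using fin(2) by (simp add: fpush_fpush split_def f g)
  also have "\<dots> = fpush (\<lambda>(x, y). (f x, g y)) (tact M N \<Phi> \<psi>)"
    unfolding tact_def using fin by (subst fpush_fbind) (simp_all add: split_def)
  finally show ?thesis .
qed

lemma tgen_lift:
  assumes "g' \<in> tgen B M' N'"
    and f: "hmod_hom M M' f" "f ` mcar M = mcar M'"
    and f': "hmod_hom N N' f'" "f' ` mcar N = mcar N'"
  shows "\<exists>g\<in>tgen B M N. fpush (\<lambda>(x, y). (f x, f' y)) g = g'"
proof -
  note hom = hmod_homD[OF f(1)] hmod_homD[OF f'(1)]
  show ?thesis
  using assms(1) unfolding tgen_def[of B M' N'] f(2)[symmetric] f'(2)[symmetric]
  apply (elim UnE CollectE exE conjE imageE; hypsubst)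
  subgoal for m m' n a b c
    by (rule rev_bexI[OF tgenI(1)[of a M b c N B]]) (simp_all (no_asm_simp) add: hom)
  subgoal for m n n' a b c
    by (rule rev_bexI[OF tgenI(2)[of a M b N c B]]) (simp_all (no_asm_simp) add: hom)
  subgoal for k m n a b
    by (rule rev_bexI[OF tgenI(3)[of a M b N B k]]) (simp_all (no_asm_simp) add: hom)
  subgoal for k m n a b
    by (rule rev_bexI[OF tgenI(4)[of a M b N B k]]) (simp_all (no_asm_simp) add: hom)
  subgoal for e m n a b
    by (rule rev_bexI[OF tgenI(5)[of a M b N B e]]) (simp_all (no_asm_simp) add: hom)
  done
qed

lemma fspan_tgen_zero_left:
  assumes M: "hmodule B M" and n: "n \<in> mcar N"
  shows "fspan (tgen B M N) (fdelta (mzero M, n))"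
proof -
  have z: "mzero M \<in> mcar M" using M by (simp add: hmodule_def)
  have "fspan (tgen B M N) (\<lambda>q. (-1) * (fdelta (madd M (mzero M) (mzero M), n) q
      - fdelta (mzero M, n) q - fdelta (mzero M, n) q))"
    by (intro fspan_mult fspan_gen tgenI(1) z n)
  then show ?thesis using M by simp
qed

lemma fspan_tgen_zero_right:
  assumes N: "hmodule B N" and m: "m \<in> mcar M"
  shows "fspan (tgen B M N) (fdelta (m, mzero N))"
proof -
  have z: "mzero N \<in> mcar N" using N by (simp add: hmodule_def)
  have "fspan (tgen B M N) (\<lambda>q. (-1) * (fdelta (m, madd N (mzero N) (mzero N)) q
      - fdelta (m, mzero N) q - fdelta (m, mzero N) q))"
    by (intro fspan_mult fspan_gen tgenI(2) z m)
  then show ?thesis using N by simp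
qed

definition lideal :: "'h::ring_1 set \<Rightarrow> bool" where
  "lideal I \<longleftrightarrow> 0 \<in> I \<and> (\<forall>x\<in>I. \<forall>y\<in>I. x + y \<in> I) \<and> (\<forall>h. \<forall>x\<in>I. h * x \<in> I)"

lemma lideal_coideal_lideal: "lideal_coideal B I \<Longrightarrow> lideal I"
  by (simp add: lideal_coideal_def lideal_def)

lemma lidealD:
  assumes "lideal I"
  shows "0 \<in> I" "x \<in> I \<Longrightarrow> y \<in> I \<Longrightarrow> x + y \<in> I" "x \<in> I \<Longrightarrow> h * x \<in> I"
    "x \<in> I \<Longrightarrow> - x \<in> I"
  using assms unfolding lideal_def by (auto, metis mult_minus1)

lemma lideal_sum:
  assumes "lideal I"
  shows "finite S \<Longrightarrow> (\<And>i. i \<in> S \<Longrightarrow> f i \<in> I) \<Longrightarrow> sum f S \<in> I"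
  by (induction S rule: finite_induct) (simp_all add: lidealD[OF assms])

lemma qmap_zero [simp]: "qmap I 0 = I"
  by (simp add: qmap_def)

lemma qmap_eq_iff:
  assumes I: "lideal I"
  shows "qmap I x = qmap I y \<longleftrightarrow> x - y \<in> I"
proof
  assume "qmap I x = qmap I y"
  moreover have "x \<in> qmap I x" using lidealD(1)[OF I] unfolding qmap_def by force
  ultimately obtain i where "i \<in> I" "x = y + i" unfolding qmap_def by auto
  then show "x - y \<in> I" by simp
next
  have sub: "qmap I x \<subseteq> qmap I y" if "x - y \<in> I" for x y
  proof
    fix z assume "z \<in> qmap I x"
    then obtain i where "i \<in> I" "z = y + ((x - y) + i)" unfolding qmap_def by auto
    then show "z \<in> qmap I y" using lidealD(2)[OF I that] unfolding qmap_def by blast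
  qed
  assume "x - y \<in> I"
  moreover from lidealD(4)[OF I this] have "y - x \<in> I" by simp
  ultimately show "qmap I x = qmap I y" using sub by blast
qed

lemma qmap_eq_self_iff: "lideal I \<Longrightarrow> qmap I x = I \<longleftrightarrow> x \<in> I"
  using qmap_eq_iff[of I x 0] by simp

lemma qmap_add:
  assumes I: "lideal I"
  shows "qmap I x + qmap I y = qmap I (x + y)"
proof
  show "qmap I x + qmap I y \<subseteq> qmap I (x + y)"
    unfolding qmap_def set_plus_def using lidealD(2)[OF I] by (auto simp: algebra_simps)
  show "qmap I (x + y) \<subseteq> qmap I x + qmap I y"
    unfolding qmap_def set_plus_def using lidealD(1)[OF I]
    by (auto simp: algebra_simps) (metis add.assoc add_0)
qed

lemma qmap_sum:
  assumes I: "lideal I"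
  shows "finite A \<Longrightarrow> I + (\<Sum>P\<in>A. qmap I (g P)) = qmap I (\<Sum>P\<in>A. g P)"
proof (induction A rule: finite_induct)
  case (insert x A)
  have "I + (\<Sum>P\<in>insert x A. qmap I (g P)) = qmap I (g x) + (I + (\<Sum>P\<in>A. qmap I (g P)))"
    using insert.hyps by (simp add: add.left_commute)
  also have "\<dots> = qmap I (\<Sum>P\<in>insert x A. g P)"
    using insert by (simp add: qmap_add[OF I])
  finally show ?case .
qed (use qmap_add[OF I, of 0 0] in simp)

section \<open>Kernels of quotients of \<open>H\<close>\<close>

lemma mc_hom_Hc_eq_iff:
  assumes C: "hmodule B C" and \<pi>: "mc_hom B (Hc B) C \<pi>"
  shows "\<pi> x = \<pi> y \<longleftrightarrow> x - y \<in> kerm C \<pi>"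
proof -
  note hom = mc_hom_HcD[OF \<pi>]
  have "\<pi> x = madd C (\<pi> (x - y)) (\<pi> y)" using hom(2)[of "x - y" y] by simp
  moreover have "madd C (mzero C) (\<pi> y) = \<pi> y" using C hom(1) by (simp add: hmodule_def)
  ultimately show ?thesis
    using hmodule_cancel[OF C hom(1) hom(1)] by (auto simp: kerm_def)
qed

lemma lideal_kerm:
  assumes C: "hmodule B C" and \<pi>: "mc_hom B (Hc B) C \<pi>"
  shows "lideal (kerm C \<pi>)"
  using hmod_hom_zero[OF hmodule_Hc C mc_hom_hmod_hom[OF \<pi>]] hmodule_mact_zero[OF C]
    hmodule_zero_add[OF C]
  by (simp add: lideal_def kerm_def mc_hom_HcD(2,3)[OF \<pi>])

lemma fcong_fdelta_split:
  "fcong (tgen B (Hc B) (Hc B)) (fdelta (u, v))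
     (\<lambda>q. fdelta (u - u', v) q + fdelta (u', v - v') q + fdelta (u', v') q)"
proof -
  have "fspan (tgen B (Hc B) (Hc B)) (\<lambda>q.
      (fdelta (u' + (u - u'), v) q - fdelta (u', v) q - fdelta (u - u', v) q) +
      (fdelta (u', v' + (v - v')) q - fdelta (u', v') q - fdelta (u', v - v') q))"
    using tgenI(1)[of u' "Hc B" "u - u'" v "Hc B" B] tgenI(2)[of u' "Hc B" v' "Hc B" "v - v'" B]
    by (intro fspan_add fspan_gen) simp_all
  then show ?thesis by (simp add: fcong_def algebra_simps)
qed

text \<open>Right exactness of \<open>\<otimes>\<^sub>A\<close>. With \<open>u' = R (\<pi> u)\<close> and \<open>v' = R (\<pi> v)\<close> for a right inverse
  \<open>R\<close> of \<open>\<pi>\<close>, \<open>u \<otimes> v = (u - u') \<otimes> v + u' \<otimes> (v - v') + u' \<otimes> v'\<close>, and the terms \<open>u' \<otimes> v'\<close>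
  add up to \<open>(R \<otimes> R) ((\<pi> \<otimes> \<pi>) \<phi>) = 0\<close>.\<close>

lemma teq_Hc_kerm_split:
  fixes B :: "('k::field, 'a::ring_1, 'h::ring_1) bialg" and \<phi> :: "'h \<times> 'h \<Rightarrow> 'k"
  assumes C: "hmodule B C" and \<pi>: "mc_hom B (Hc B) C \<pi>"
    and fin: "finite (fsupp \<phi>)" and null: "fpush (\<lambda>(x, y). (\<pi> x, \<pi> y)) \<phi> = (\<lambda>_. 0)"
  shows "\<exists>\<psi>. finite (fsupp \<psi>) \<and> fsupp \<psi> \<subseteq> (kerm C \<pi> \<times> UNIV) \<union> (UNIV \<times> kerm C \<pi>)
     \<and> teq B (Hc B) (Hc B) \<phi> \<psi>"
proof -
  define R where "R c = (SOME x. \<pi> x = c)" for c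
  have R: "\<pi> (R (\<pi> x)) = \<pi> x" for x unfolding R_def by (rule someI_ex) blast
  define \<kappa> where "\<kappa> = (\<lambda>(u, v). (R (\<pi> u), R (\<pi> v)))"
  define \<Psi> where
    "\<Psi> = (\<lambda>(u, v) q. fdelta (u - R (\<pi> u), v) q + (fdelta (R (\<pi> u), v - R (\<pi> v)) q :: 'k))"
  define \<psi> where "\<psi> = fbind \<phi> \<Psi>"
  have "teq B (Hc B) (Hc B) (fbind \<phi> fdelta) (fbind \<phi> (\<lambda>p q. \<Psi> p q + fdelta (\<kappa> p) q))"
    unfolding teq_fcong
    by (rule fcong_fbind[OF fin]) (auto simp: \<Psi>_def \<kappa>_def fcong_fdelta_split)
  moreover have "fpush \<kappa> \<phi> = (\<lambda>_. 0)"
  proof -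
    have "\<kappa> = (\<lambda>p. (\<lambda>(x, y). (R x, R y)) ((\<lambda>(x, y). (\<pi> x, \<pi> y)) p))"
      by (auto simp: \<kappa>_def)
    then show ?thesis by (simp add: fpush_fpush[OF fin, symmetric] null)
  qed
  ultimately have "teq B (Hc B) (Hc B) \<phi> \<psi>"
    by (simp add: fbind_fdelta[OF fin] fbind_add \<psi>_def fpush_def[of \<kappa>])
  moreover have "fsupp \<psi> \<subseteq> (kerm C \<pi> \<times> UNIV) \<union> (UNIV \<times> kerm C \<pi>)"
  proof -
    have "\<pi> (u - R (\<pi> u)) = mzero C" for u
      using mc_hom_Hc_eq_iff[OF C \<pi>, of u "R (\<pi> u)"] R[of u] by (simp add: kerm_def)
    moreover have "fsupp (\<Psi> (u, v)) \<subseteq> {(u - R (\<pi> u), v), (R (\<pi> u), v - R (\<pi> v))}" for u v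
      by (auto simp: \<Psi>_def fsupp_def fdelta_def)
    ultimately have "fsupp (\<Psi> p) \<subseteq> (kerm C \<pi> \<times> UNIV) \<union> (UNIV \<times> kerm C \<pi>)" for p
      by (cases p) (fastforce simp: kerm_def)
    then show ?thesis using fsupp_fbind[of \<phi> \<Psi>] unfolding \<psi>_def by blast
  qed
  moreover have "finite (fsupp \<psi>)"
    unfolding \<psi>_def using fin by (intro finite_fsupp_fbind) (auto simp: \<Psi>_def split: prod.splits)
  ultimately show ?thesis by blast
qed

lemma fspan_mcop_zero:
  assumes "module_coring B C"
  shows "fspan (tgen B C C) (mcop C (mzero C))"
proof -
  note C = module_coringD[OF assms]
  have "mzero C \<in> mcar C" using C(1) by (simp add: hmodule_def)
  from C(3)[OF this this] have
    "fspan (tgen B C C) (\<lambda>p. mcop C (mzero C) p - (mcop C (mzero C) p + mcop C (mzero C) p))"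
    unfolding hmodule_zero_add[OF C(1)] teq_fcong fcong_def .
  from fspan_mult[OF this, of "-1"] show ?thesis by simp
qed

lemma cop_kerm_coideal:
  fixes B :: "('k::field, 'a::ring_1, 'h::ring_1) bialg"
  assumes B: "bialgebroid B" and C: "module_coring B C" and \<pi>: "mc_hom B (Hc B) C \<pi>"
    and onto: "range \<pi> = mcar C" and x: "x \<in> kerm C \<pi>"
  shows "\<exists>\<psi>. tsum (Hc B) (Hc B) \<psi> \<and> fsupp \<psi> \<subseteq> (kerm C \<pi> \<times> UNIV) \<union> (UNIV \<times> kerm C \<pi>) \<and>
     teq B (Hc B) (Hc B) (cop B x) \<psi>"
proof -
  let ?P = "fpush (\<lambda>(u, v). (\<pi> u, \<pi> v))"
  have fx: "finite (fsupp (cop B x))" by (rule bialgebroidD(1)[OF B])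
  have "fcong (tgen B C C) (mcop C (mzero C)) (?P (cop B x))"
    using mc_hom_HcD(4)[OF \<pi>, of x] x by (simp add: kerm_def teq_fcong)
  then have "fspan (tgen B C C) (?P (cop B x))"
    using fspan_diff[OF fspan_mcop_zero[OF C]] by (fastforce simp: fcong_def)
  moreover have "fspan (tgen B C C) \<chi> \<Longrightarrow> \<exists>\<theta>. fspan (tgen B (Hc B) (Hc B)) \<theta> \<and> ?P \<theta> = \<chi>" for \<chi>
    by (rule fspan_lift[OF finite_fsupp_tgen tgen_lift]) (use mc_hom_hmod_hom[OF \<pi>] onto in auto)
  ultimately obtain \<theta> where \<theta>: "fspan (tgen B (Hc B) (Hc B)) \<theta>" "?P \<theta> = ?P (cop B x)"
    by blast
  have f\<theta>: "finite (fsupp \<theta>)" by (rule fspan_finite[OF finite_fsupp_tgen \<theta>(1)])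
  have "?P (\<lambda>p. cop B x p - \<theta> p) = (\<lambda>_. 0)" using \<theta>(2) fx f\<theta> by simp
  from teq_Hc_kerm_split[OF module_coringD(1)[OF C] \<pi> _ this] fx f\<theta>
  obtain \<psi> where \<psi>: "finite (fsupp \<psi>)" "fsupp \<psi> \<subseteq> (kerm C \<pi> \<times> UNIV) \<union> (UNIV \<times> kerm C \<pi>)"
    "teq B (Hc B) (Hc B) (\<lambda>p. cop B x p - \<theta> p) \<psi>" by auto
  have "teq B (Hc B) (Hc B) (cop B x) \<psi>"
    using fspan_add[OF \<psi>(3)[unfolded teq_fcong fcong_def] \<theta>(1)] by (simp add: teq_fcong fcong_def)
  then show ?thesis using \<psi>(1,2) by (auto simp: tsum_def)
qed

lemma lideal_coideal_kerm:
  fixes B :: "('k::field, 'a::ring_1, 'h::ring_1) bialg"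
  assumes B: "bialgebroid B" and C: "module_coring B C" and \<pi>: "mc_hom B (Hc B) C \<pi>"
    and onto: "range \<pi> = mcar C"
  shows "lideal_coideal B (kerm C \<pi>)"
proof -
  have CM: "hmodule B C" by (rule module_coringD(1)[OF C])
  have "mcou C (mzero C) = 0"
    using module_coringD(4)[OF C, of "mzero C" "mzero C"] CM by (simp add: hmodule_def)
  then have "cou B x = 0" if "x \<in> kerm C \<pi>" for x
    using mc_hom_HcD(5)[OF \<pi>, of x] that by (simp add: kerm_def)
  then show ?thesis
    using lideal_kerm[OF CM \<pi>] cop_kerm_coideal[OF B C \<pi> onto]
    by (simp add: lideal_coideal_def lideal_def)
qed

lemma mc_hom_factor:
  fixes B :: "('k::field, 'a::ring_1, 'h::ring_1) bialg"
  assumes B: "bialgebroid B" and Q: "module_coring B Q"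
    and p: "mc_hom B (Hc B) Q p" and Qp: "mcar Q = range p"
    and \<pi>: "mc_hom B (Hc B) C \<pi>" and onto: "range \<pi> = mcar C"
    and fibres: "\<And>x y. p x = p y \<longleftrightarrow> \<pi> x = \<pi> y"
  shows "\<exists>\<phi>. mc_hom B Q C \<phi> \<and> bij_betw \<phi> (mcar Q) (mcar C) \<and> (\<forall>x. \<phi> (p x) = \<pi> x)"
proof -
  define \<phi> where "\<phi> X = \<pi> (SOME x. p x = X)" for X
  have \<phi>: "\<phi> (p x) = \<pi> x" for x
    unfolding \<phi>_def using someI_ex[of "\<lambda>y. p y = p x"] fibres by blast
  note hp = mc_hom_HcD[OF p] and h\<pi> = mc_hom_HcD[OF \<pi>]
  have hom: "hmod_hom Q C \<phi>"
    unfolding hmod_hom_def Qp using \<phi> h\<pi>(1-3) hp(2,3) by (auto simp flip: hp(2,3))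
  have "teq B C C (mcop C (\<phi> (p x))) (fpush (\<lambda>(u, v). (\<phi> u, \<phi> v)) (mcop Q (p x)))" for x
  proof -
    have fx: "finite (fsupp (cop B x))" by (rule bialgebroidD(1)[OF B])
    have "teq B C C (fpush (\<lambda>(u, v). (\<phi> u, \<phi> v)) (mcop Q (p x)))
        (fpush (\<lambda>(u, v). (\<phi> u, \<phi> v)) (fpush (\<lambda>(u, v). (p u, p v)) (cop B x)))"
      using module_coringD(2)[OF Q hp(1)] fx by (intro teq_fpush[OF hp(4) _ _ hom hom]) simp_all
    also have "fpush (\<lambda>(u, v). (\<phi> u, \<phi> v)) (fpush (\<lambda>(u, v). (p u, p v)) (cop B x))
       = fpush (\<lambda>(u, v). (\<pi> u, \<pi> v)) (cop B x)"
      by (simp add: fpush_fpush[OF fx] \<phi> split_def)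
    finally show ?thesis using teq_trans[OF h\<pi>(4) teq_sym] \<phi> by simp
  qed
  then have "mc_hom B Q C \<phi>"
    using hom hp(5) h\<pi>(5) \<phi> unfolding mc_hom_def hmod_hom_def Qp by auto
  moreover have "bij_betw \<phi> (mcar Q) (mcar C)"
    unfolding bij_betw_def inj_on_def Qp onto[symmetric] using \<phi> fibres by (auto simp: image_iff)
  ultimately show ?thesis using \<phi> by blast
qed

lemma mc_hom_factor_qmap_kerm:
  fixes B :: "('k::field, 'a::ring_1, 'h::ring_1) bialg"
  assumes B: "bialgebroid B" and C: "module_coring B C"
    and \<pi>: "mc_hom B (Hc B) C \<pi>" and onto: "range \<pi> = mcar C"
    and Qp: "mcar Q = range (qmap (kerm C \<pi>))" and Q: "module_coring B Q"
    and p: "mc_hom B (Hc B) Q (qmap (kerm C \<pi>))"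
  shows "\<exists>\<phi>. mc_hom B Q C \<phi> \<and> bij_betw \<phi> (mcar Q) (mcar C)
    \<and> (\<forall>x. \<phi> (qmap (kerm C \<pi>) x) = \<pi> x)"
proof (rule mc_hom_factor[OF B Q p Qp \<pi> onto])
  show "qmap (kerm C \<pi>) x = qmap (kerm C \<pi>) y \<longleftrightarrow> \<pi> x = \<pi> y" for x y
    using module_coringD(1)[OF C] \<pi> by (simp add: qmap_eq_iff[OF lideal_kerm] mc_hom_Hc_eq_iff)
qed

section \<open>The quotient module coring \<open>H/I\<close>\<close>

definition qrep :: "'h::ring_1 set \<Rightarrow> 'h set \<Rightarrow> 'h" where
  "qrep I X = (SOME x. qmap I x = X)"

definition Qc :: "('k::field, 'a, 'h::ring_1) bialg \<Rightarrow> 'h set \<Rightarrow> ('h, 'h set, 'k, 'a) hcor" where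
  "Qc B I = \<lparr>mcar = range (qmap I), madd = (+), mzero = I,
     mact = (\<lambda>h X. qmap I (h * qrep I X)),
     mcop = (\<lambda>X. fpush (\<lambda>(u, v). (qmap I u, qmap I v)) (cop B (qrep I X))),
     mcou = (\<lambda>X. cou B (qrep I X))\<rparr>"

lemma Qc_simps [simp]: "mcar (Qc B I) = range (qmap I)" "madd (Qc B I) = (+)" "mzero (Qc B I) = I"
  by (simp_all add: Qc_def)

lemma Qc_mact: "mact (Qc B I) h X = qmap I (h * qrep I X)"
  and Qc_mcop: "mcop (Qc B I) X = fpush (\<lambda>(u, v). (qmap I u, qmap I v)) (cop B (qrep I X))"
  and Qc_mcou: "mcou (Qc B I) X = cou B (qrep I X)"
  by (simp_all add: Qc_def)

lemma msum_Qc: "finite S \<Longrightarrow> msum (Qc B I) f S = I + sum f S"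
  by (simp add: msum_def fold_add_eq_sum)

lemma qmap_qrep [simp]: "qmap I (qrep I (qmap I x)) = qmap I x"
  unfolding qrep_def by (rule someI_ex) blast

context
  fixes B :: "('k::field, 'a::ring_1, 'h::ring_1) bialg" and I :: "'h set"
  assumes B: "bialgebroid B" and I: "lideal_coideal B I"
begin

abbreviation (input) q where "q \<equiv> qmap I"
abbreviation (input) Q where "Q \<equiv> Qc B I"

lemmas finite_fsupp_cop [simp] = bialgebroidD(1)[OF B]

lemma lideal_I: "lideal I"
  using I by (rule lideal_coideal_lideal)

lemma qrep_diff: "qrep I (q x) - x \<in> I"
  using qmap_eq_iff[OF lideal_I, of "qrep I (q x)" x] by simp

lemma Qc_mact_qmap [simp]: "mact Q h (q x) = q (h * x)"
proof -
  have "h * qrep I (q x) - h * x = h * (qrep I (q x) - x)" by (simp add: algebra_simps)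
  then show ?thesis
    using lidealD(3)[OF lideal_I qrep_diff] qmap_eq_iff[OF lideal_I] by (simp add: Qc_mact)
qed

lemma cou_qrep [simp]: "cou B (qrep I (q x)) = cou B x"
proof -
  have "cou B (qrep I (q x)) = cou B x + cou B (qrep I (q x) - x)"
    using bialgebroidD(4)[OF B, of x "qrep I (q x) - x"] by simp
  then show ?thesis using I qrep_diff by (simp add: lideal_coideal_def)
qed

lemma hmodule_Qc: "hmodule B Q"
proof -
  have "\<exists>y\<in>range q. X + y = I" if "X \<in> range q" for X
  proof -
    from that obtain x where "X = q x" by blast
    then show ?thesis using qmap_add[OF lideal_I, of x "- x"] by auto
  qed
  then show ?thesis
    unfolding hmodule_def
    using qmap_add[OF lideal_I, of 0] rangeI[of q 0]
    by (auto simp: qmap_add[OF lideal_I] algebra_simps)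
qed

lemma hmod_hom_qmap: "hmod_hom (Hc B) Q q"
  by (simp add: hmod_hom_def qmap_add[OF lideal_I])

lemma finite_fsupp_mcop_Qc: "finite (fsupp (mcop Q X))"
  by (simp add: Qc_mcop)

lemma fspan_fpush_qmap_coideal:
  assumes fin: "finite (fsupp \<psi>)" and supp: "fsupp \<psi> \<subseteq> (I \<times> UNIV) \<union> (UNIV \<times> I)"
  shows "fspan (tgen B Q Q) (fpush (\<lambda>(u, v). (q u, q v)) \<psi>)"
proof -
  have "fspan (tgen B Q Q) (fdelta (q u, q v))" if "(u, v) \<in> fsupp \<psi>" for u v
  proof (cases "u \<in> I")
    case True
    then have "q u = mzero Q" using qmap_eq_self_iff[OF lideal_I] by simp
    then show ?thesis using fspan_tgen_zero_left[OF hmodule_Qc, of "q v" Q] by simp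
  next
    case False
    with that supp have "q v = mzero Q" using qmap_eq_self_iff[OF lideal_I] by auto
    then show ?thesis using fspan_tgen_zero_right[OF hmodule_Qc, of "q u" Q] by simp
  qed
  then have "fspan (tgen B Q Q) (fbind \<psi> (\<lambda>p. fdelta ((\<lambda>(u, v). (q u, q v)) p)))"
    by (intro fspan_fbind[OF fin]) auto
  then show ?thesis by (simp add: fpush_def)
qed

text \<open>The comultiplication of \<open>H/I\<close> does not depend on the chosen representative:
  this is where \<open>I\<close> being a coideal is used.\<close>

lemma teq_mcop_Qc_qmap: "teq B Q Q (mcop Q (q x)) (fpush (\<lambda>(u, v). (q u, q v)) (cop B x))"
proof -
  let ?P = "fpush (\<lambda>(u, v). (q u, q v))"
  define i where "i = qrep I (q x) - x"
  have i: "i \<in> I" unfolding i_def by (rule qrep_diff)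
  from I i obtain \<psi> where \<psi>: "tsum (Hc B) (Hc B) \<psi>" "fsupp \<psi> \<subseteq> (I \<times> UNIV) \<union> (UNIV \<times> I)"
      "teq B (Hc B) (Hc B) (cop B i) \<psi>"
    unfolding lideal_coideal_def by blast
  have f\<psi>: "finite (fsupp \<psi>)" using \<psi>(1) by (simp add: tsum_def)
  have "teq B Q Q (mcop Q (q x)) (\<lambda>y. ?P (cop B x) y + ?P (cop B i) y)"
    using teq_fpush[OF bialgebroidD(2)[OF B, of x i] finite_fsupp_cop _ hmod_hom_qmap hmod_hom_qmap]
    by (simp add: Qc_mcop i_def)
  moreover have "teq B Q Q (?P (cop B i)) (\<lambda>_. 0)"
  proof -
    have "fspan (tgen B Q Q) (\<lambda>p. (?P (cop B i) p - ?P \<psi> p) + ?P \<psi> p)"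
      using teq_fpush[OF \<psi>(3) finite_fsupp_cop f\<psi> hmod_hom_qmap hmod_hom_qmap]
      by (intro fspan_add fspan_fpush_qmap_coideal[OF f\<psi> \<psi>(2)]) (simp add: teq_fcong fcong_def)
    then show ?thesis by (simp add: teq_fcong fcong_def)
  qed
  ultimately show ?thesis
    using teq_trans teq_add[OF teq_refl] by fastforce
qed

lemma tsum_mcop_Qc: "tsum Q Q (mcop Q X)"
  using fsupp_fpush[of "\<lambda>(u, v). (q u, q v)" "cop B (qrep I X)"] finite_fsupp_mcop_Qc
  by (auto simp: tsum_def Qc_mcop)

lemma teq_mcop_Qc_add: "teq B Q Q (mcop Q (q x + q y)) (\<lambda>p. mcop Q (q x) p + mcop Q (q y) p)"
proof -
  let ?P = "fpush (\<lambda>(u, v). (q u, q v))"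
  have "teq B Q Q (mcop Q (q (x + y))) (?P (cop B (x + y)))" by (rule teq_mcop_Qc_qmap)
  also have "teq B Q Q \<dots> (\<lambda>p. ?P (cop B x) p + ?P (cop B y) p)"
    using teq_fpush[OF bialgebroidD(2)[OF B, of x y] finite_fsupp_cop _ hmod_hom_qmap hmod_hom_qmap]
    by simp
  also have "teq B Q Q \<dots> (\<lambda>p. mcop Q (q x) p + mcop Q (q y) p)"
    by (intro teq_add teq_sym[OF teq_mcop_Qc_qmap])
  finally show ?thesis by (simp add: qmap_add[OF lideal_I])
qed

lemma teq_mcop_Qc_mact: "teq B Q Q (mcop Q (mact Q h X)) (tact Q Q (cop B h) (mcop Q X))"
proof -
  define r where "r = qrep I X"
  let ?P = "fpush (\<lambda>(u, v). (q u, q v))"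
  have "teq B Q Q (mcop Q (q (h * r))) (?P (cop B (h * r)))" by (rule teq_mcop_Qc_qmap)
  also have "teq B Q Q \<dots> (?P (tact (Hc B) (Hc B) (cop B h) (cop B r)))"
    unfolding tact_def
    by (intro teq_fpush[OF bialgebroidD(3)[OF B, unfolded tact_def] _ _ hmod_hom_qmap hmod_hom_qmap]
        finite_fsupp_fbind) (auto split: prod.splits)
  also have "?P (tact (Hc B) (Hc B) (cop B h) (cop B r)) = tact Q Q (cop B h) (mcop Q X)"
    using tact_fpush[OF finite_fsupp_cop finite_fsupp_cop, of q "Hc B" Q q "Hc B" Q]
    by (simp add: Qc_mcop r_def)
  finally show ?thesis by (simp add: Qc_mact r_def)
qed

lemma teq3_coassoc_Qc_left:
  "teq3 B Q Q Q (fbind (mcop Q X) (\<lambda>(u, v). fpush (\<lambda>(x, y). (x, y, v)) (mcop Q u)))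
     (fpush (\<lambda>(x, y, z). (q x, q y, q z))
        (fbind (cop B (qrep I X)) (\<lambda>(u, v). fpush (\<lambda>(x, y). (x, y, v)) (cop B u))))"
proof -
  have "teq3 B Q Q Q (fpush (\<lambda>(x, y). (x, y, q v)) (mcop Q (q u)))
      (fpush (\<lambda>(x, y, z). (q x, q y, q z)) (fpush (\<lambda>(x, y). (x, y, v)) (cop B u)))" for u v
    using teq_fpush_right_slot[OF teq_mcop_Qc_qmap[of u] finite_fsupp_mcop_Qc
        finite_fsupp_fpush[OF finite_fsupp_cop], where r = "q v" and P = Q]
    by (simp add: fpush_fpush split_def)
  then show ?thesis
    by (simp add: Qc_mcop fbind_fpush fpush_fbind split_def teq3_fbind)
qed

lemma teq3_coassoc_Qc_right:
  "teq3 B Q Q Q (fbind (mcop Q X) (\<lambda>(u, v). fpush (\<lambda>(x, y). (u, x, y)) (mcop Q v)))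
     (fpush (\<lambda>(x, y, z). (q x, q y, q z))
        (fbind (cop B (qrep I X)) (\<lambda>(u, v). fpush (\<lambda>(x, y). (u, x, y)) (cop B v))))"
proof -
  have "teq3 B Q Q Q (fpush (\<lambda>(x, y). (q u, x, y)) (mcop Q (q v)))
      (fpush (\<lambda>(x, y, z). (q x, q y, q z)) (fpush (\<lambda>(x, y). (u, x, y)) (cop B v)))" for u v
    using teq_fpush_left_slot[OF teq_mcop_Qc_qmap[of v] finite_fsupp_mcop_Qc
        finite_fsupp_fpush[OF finite_fsupp_cop], where m = "q u" and M = Q]
    by (simp add: fpush_fpush split_def)
  then show ?thesis
    by (simp add: Qc_mcop fbind_fpush fpush_fbind split_def teq3_fbind)
qed

lemma coassoc_Qc: "coassoc B Q (mcop Q)"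
  unfolding coassoc_def
proof
  fix X
  let ?q3 = "\<lambda>(x, y, z). (q x, q y, q z)"
  let ?L = "fbind (cop B (qrep I X)) (\<lambda>(u, v). fpush (\<lambda>(x, y). (x, y, v)) (cop B u))"
  let ?R = "fbind (cop B (qrep I X)) (\<lambda>(u, v). fpush (\<lambda>(x, y). (u, x, y)) (cop B v))"
  have "teq3 B (Hc B) (Hc B) (Hc B) ?L ?R"
    using bialgebroidD(6)[OF B] by (simp add: coassoc_def)
  then have "teq3 B Q Q Q (fpush ?q3 ?L) (fpush ?q3 ?R)"
    using hmod_hom_qmap by (intro teq3_fpush finite_fsupp_fbind) (auto split: prod.splits)
  then show "teq3 B Q Q Q (fbind (mcop Q X) (\<lambda>(u, v). fpush (\<lambda>(x, y). (x, y, v)) (mcop Q u)))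
      (fbind (mcop Q X) (\<lambda>(u, v). fpush (\<lambda>(x, y). (u, x, y)) (mcop Q v)))"
    using teq3_trans[OF teq3_coassoc_Qc_left] teq3_sym[OF teq3_coassoc_Qc_right] teq3_trans by blast
qed

lemma qmap_sum_mult_qrep: "finite S \<Longrightarrow> q (\<Sum>p\<in>S. a p * qrep I (q (b p))) = q (\<Sum>p\<in>S. a p * b p)"
  using lidealD(3)[OF lideal_I qrep_diff]
  by (simp add: qmap_eq_iff[OF lideal_I] lideal_sum[OF lideal_I]
      flip: sum_subtractf right_diff_distrib)

lemma msum_Qc_mcop:
  "msum Q (\<lambda>P. mact Q (scH B (mcop Q X P) 1 * w P) (Z P)) (fsupp (mcop Q X))
   = q (\<Sum>p\<in>fsupp (cop B (qrep I X)).
          scH B (cop B (qrep I X) p) 1 * w (q (fst p), q (snd p)) * qrep I (Z (q (fst p), q (snd p))))"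
proof -
  interpret H: vector_space "scH B" using bialgebroidD(8)[OF B] by (simp add: kalg_def)
  have "msum Q (\<lambda>P. mact Q (scH B (mcop Q X P) 1 * w P) (Z P)) (fsupp (mcop Q X))
      = q (\<Sum>P\<in>fsupp (mcop Q X). scH B (mcop Q X P) 1 * w P * qrep I (Z P))"
    by (simp add: msum_Qc finite_fsupp_mcop_Qc Qc_mact qmap_sum[OF lideal_I])
  also have "\<dots> = q (\<Sum>p\<in>fsupp (cop B (qrep I X)).
      scH B (cop B (qrep I X) p) 1 * w (q (fst p), q (snd p)) * qrep I (Z (q (fst p), q (snd p))))"
    unfolding Qc_mcop
    by (subst sum_fsupp_fpush[OF finite_fsupp_cop])
      (simp_all add: H.scale_left_distrib distrib_right split_def)
  finally show ?thesis .
qed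

lemma counital_Qc: "counital B Q (mcop Q) (mcou Q)"
  unfolding counital_def
proof (intro ballI conjI)
  fix X assume "X \<in> mcar Q"
  then have X: "q (qrep I X) = X" by auto
  let ?\<phi> = "cop B (qrep I X)"
  have "(\<Sum>p\<in>fsupp ?\<phi>. scH B (?\<phi> p) 1 * src B (cou B (fst p)) * snd p) = qrep I X"
    "(\<Sum>p\<in>fsupp ?\<phi>. scH B (?\<phi> p) 1 * tgt B (cou B (snd p)) * fst p) = qrep I X"
    using bspec[OF bialgebroidD(7)[OF B, unfolded counital_def], of "qrep I X"]
    by (simp_all add: msum_Hc)
  then show "msum Q (\<lambda>p. mact Q (scH B (mcop Q X p) 1 * src B (mcou Q (fst p))) (snd p))
      (fsupp (mcop Q X)) = X"
    and "msum Q (\<lambda>p. mact Q (scH B (mcop Q X p) 1 * tgt B (mcou Q (snd p))) (fst p))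
      (fsupp (mcop Q X)) = X"
    using X by (simp_all add: msum_Qc_mcop Qc_mcou qmap_sum_mult_qrep)
qed

lemma module_coring_Qc: "module_coring B Q"
  unfolding module_coring_def
proof (intro conjI ballI allI)
  fix X Y assume "X \<in> mcar Q" "Y \<in> mcar Q"
  then obtain x y where xy: "X = q x" "Y = q y" by auto
  show "teq B Q Q (mcop Q (madd Q X Y)) (\<lambda>p. mcop Q X p + mcop Q Y p)"
    using teq_mcop_Qc_add[of x y] by (simp add: xy)
  show "mcou Q (madd Q X Y) = mcou Q X + mcou Q Y"
    by (simp add: xy qmap_add[OF lideal_I] Qc_mcou bialgebroidD(4)[OF B])
next
  fix h X assume "X \<in> mcar Q"
  then obtain x where "X = q x" by auto
  then show "mcou Q (mact Q h X) = cou B (h * src B (mcou Q X))"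
    by (simp add: Qc_mcou bialgebroidD(5)[OF B])
qed (simp_all add: hmodule_Qc tsum_mcop_Qc teq_mcop_Qc_mact coassoc_Qc counital_Qc)

lemma mc_hom_qmap: "mc_hom B (Hc B) Q q"
  using hmod_hom_qmap teq_mcop_Qc_qmap by (simp add: mc_hom_def hmod_hom_def Qc_mcou)

lemma kerm_Qc_qmap: "kerm Q q = I"
  using qmap_eq_self_iff[OF lideal_I] by (auto simp: kerm_def)

end

theorem proposition2p3:
  fixes B :: "('k::field, 'a::ring_1, 'h::ring_1) bialg"
  assumes "bialgebroid B"
  shows
    "(\<forall>I. lideal_coideal B I \<longrightarrow>
        (\<exists>Q :: ('h, 'h set, 'k, 'a) hcor.
            mcar Q = range (qmap I) \<and> module_coring B Q \<and> mc_hom B (Hc B) Q (qmap I)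
            \<and> kerm Q (qmap I) = I))
   \<and> (\<forall>(C :: ('h, 'b, 'k, 'a) hcor) \<pi>.
        module_coring B C \<and> mc_hom B (Hc B) C \<pi> \<and> range \<pi> = mcar C \<longrightarrow>
          lideal_coideal B (kerm C \<pi>) \<and>
          (\<forall>Q :: ('h, 'h set, 'k, 'a) hcor.
             mcar Q = range (qmap (kerm C \<pi>)) \<and> module_coring B Q
             \<and> mc_hom B (Hc B) Q (qmap (kerm C \<pi>)) \<longrightarrow>
             (\<exists>\<phi>. mc_hom B Q C \<phi> \<and> bij_betw \<phi> (mcar Q) (mcar C)
                  \<and> (\<forall>x. \<phi> (qmap (kerm C \<pi>) x) = \<pi> x))))"
  apply (intro conjI allI impI)
  subgoal for I
    using Qc_simps(1) module_coring_Qc[OF assms] mc_hom_qmap[OF assms] kerm_Qc_qmap[OF assms]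
    by (intro exI[of _ "Qc B I"]) simp
  subgoal for C \<pi>
    by (elim conjE) (rule lideal_coideal_kerm[OF assms])
  subgoal for C \<pi> Q
    by (elim conjE) (rule mc_hom_factor_qmap_kerm[OF assms])
  done

end
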